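(* Let the prior joint distribution of the losses $(X,Y)$ be bivariate normal with means $\mu_X,\mu_Y$, standard deviations $\sigma_X,\sigma_Y>0$ and correlation $\rho\in(-1,1)$, let $\alpha\in(0,1)$, let $\rho_1\in(-1,1)$, and let $\tilde\rho$ denote the posterior correlation coefficient of $X$ and $Y$ (under the entropy-pooling posterior described in the context). (i) Under the equality view $\tilde\rho=\rho_1$, $$\mathrm{CoVaR}_\alpha^{Y|\tilde\rho=\rho_1}=\mu_Y+\sigma_Y\left(\frac{1-\rho^2}{1-\rho\rho_1}\right)^{1/2}\Phi^{-1}(\alpha).$$ (ii) Under the inequality view $\tilde\rho\le\rho_1$: if $\rho\le\rho_1$, then $\mathrm{CoVaR}_\alpha^{Y|\tilde\rho\le\rho_1}=\mathrm{VaR}_\alpha^Y$; if $\rho>\rho_1$, then $\mathrm{CoVaR}_\alpha^{Y|\tilde\rho\le\rho_1}=\mathrm{CoVaR}_\alpha^{Y|\tilde\rho=\rho_1}$. (iii) Under the inequality view $\tilde\rho\ge\rho_1$: if $\rho\ge\rho_1$, then $\mathrm{CoVaR}_\alpha^{Y|\tilde\rho\ge\rho_1}=\mathrm{VaR}_\alpha^Y$; if $\rho<\rho_1$, then $\mathrm{CoVaR}_\alpha^{Y|\tilde\rho\ge\rho_1}=\mathrm{CoVaR}_\alpha^{Y|\tilde\rho=\rho_1}$.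
   Context: Entropy-pooling framework: given a "view" $V$ (a constraint on the posterior parameters), the posterior distribution of $(X,Y)$ is the bivariate normal distribution with means $\tilde\mu_X,\tilde\mu_Y$, standard deviations $\tilde\sigma_X,\tilde\sigma_Y>0$ and correlation $\tilde\rho\in(-1,1)$ that minimizes the relative entropy (Kullback–Leibler divergence) $\varepsilon(\tilde f,f)=\int \tilde f\,(\ln\tilde f-\ln f)$ of its density $\tilde f$ with respect to the prior density $f$, among all bivariate normal distributions satisfying $V$. The general CoVaR under view $V$ is $\mathrm{CoVaR}_\alpha^{Y|V}=\tilde\mu_Y+\tilde\sigma_Y\Phi^{-1}(\alpha)$, where $\Phi$ is the standard normal cdf. $\mathrm{VaR}_\alpha^Y=\mu_Y+\sigma_Y\Phi^{-1}(\alpha)$. *)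

theory Defs
  imports "HOL-Probability.Probability"
begin

type_synonym binorm_params = "real \<times> real \<times> real \<times> real \<times> real"

definition mu_X :: "binorm_params \<Rightarrow> real" where "mu_X p = fst p"
definition mu_Y :: "binorm_params \<Rightarrow> real" where "mu_Y p = fst (snd p)"
definition sigma_X :: "binorm_params \<Rightarrow> real" where "sigma_X p = fst (snd (snd p))"
definition sigma_Y :: "binorm_params \<Rightarrow> real" where "sigma_Y p = fst (snd (snd (snd p)))"
definition corr :: "binorm_params \<Rightarrow> real" where "corr p = snd (snd (snd (snd p)))"

definition valid_params :: "binorm_params \<Rightarrow> bool" where
  "valid_params p \<longleftrightarrow> sigma_X p > 0 \<and> sigma_Y p > 0 \<and> -1 < corr p \<and> corr p < 1"

definition binorm_density :: "binorm_params \<Rightarrow> real \<times> real \<Rightarrow> real" where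
  "binorm_density p = (\<lambda>(x, y).
     let mx = mu_X p; my = mu_Y p; sx = sigma_X p; sy = sigma_Y p; r = corr p;
         u = (x - mx) / sx; v = (y - my) / sy
     in exp (- (u\<^sup>2 - 2 * r * u * v + v\<^sup>2) / (2 * (1 - r\<^sup>2)))
        / (2 * pi * sx * sy * sqrt (1 - r\<^sup>2)))"

definition rel_entropy :: "binorm_params \<Rightarrow> binorm_params \<Rightarrow> real" where
  "rel_entropy q p = (\<integral>z. binorm_density q z * (ln (binorm_density q z) - ln (binorm_density p z)) \<partial>(lborel :: (real \<times> real) measure))"

definition is_posterior :: "binorm_params \<Rightarrow> (binorm_params \<Rightarrow> bool) \<Rightarrow> binorm_params \<Rightarrow> bool" where
  "is_posterior prior V q \<longleftrightarrow> valid_params q \<and> V q \<and>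
     (\<forall>q'. valid_params q' \<and> V q' \<longrightarrow> rel_entropy q prior \<le> rel_entropy q' prior)"

definition Phi :: "real \<Rightarrow> real" where
  "Phi x = set_lebesgue_integral lborel {..x} std_normal_density"

definition Phi_inv :: "real \<Rightarrow> real" where
  "Phi_inv a = (THE x. Phi x = a)"

text \<open>CoVaR of Y under the (posterior) parameters q, and VaR of Y under the prior p.\<close>
definition CoVaR :: "real \<Rightarrow> binorm_params \<Rightarrow> real" where
  "CoVaR \<alpha> q = mu_Y q + sigma_Y q * Phi_inv \<alpha>"

definition VaR :: "real \<Rightarrow> binorm_params \<Rightarrow> real" where
  "VaR \<alpha> p = mu_Y p + sigma_Y p * Phi_inv \<alpha>"

end

theory Submission
  imports Defs
begin

(* The relative entropy of one bivariate normal law with respect to another has a closed form: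
   the density factors into a normal marginal in x times a normal conditional law in y, so by
   Fubini its integral against a quadratic polynomial in the standardized coordinates only
   involves the first two moments of a normal law.  For a fixed posterior correlation c this
   closed form is minimal exactly when the prior means are kept and both standard deviations are
   scaled by ((1 - rho^2) / (1 - rho c))^(1/2), with minimum
   ln (1 - rho c) - ln (1 - rho^2) / 2 - ln (1 - c^2) / 2.  This minimum is strictly decreasing in c
   below rho and strictly increasing above it, so under each view the posterior correlation is
   the admissible value closest to rho, and CoVaR is read off from the scaled sigma_Y. *)

lemma valid_params_iff: "valid_params (a, b, s, t, c) \<longleftrightarrow> 0 < s \<and> 0 < t \<and> c\<^sup>2 < 1"
  by (auto simp: valid_params_def sigma_X_def sigma_Y_def corr_def abs_square_less_1 abs_less_iff)

lemma square_less_1I: "-1 < c \<Longrightarrow> c < 1 \<Longrightarrow> (c::real)\<^sup>2 < 1"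
  by (simp add: abs_square_less_1 abs_less_iff)

lemma mult_less_1_of_squares_less_1:
  fixes r c :: real
  assumes "r\<^sup>2 < 1" and "c\<^sup>2 < 1"
  shows "r * c < 1"
proof -
  have "\<bar>r\<bar> * \<bar>c\<bar> < 1 * 1"
    using assms by (intro mult_strict_mono') (simp_all add: abs_square_less_1)
  then show ?thesis
    using abs_ge_self[of "r * c"] by (simp add: abs_mult)
qed

definition quad_poly :: "real \<Rightarrow> real \<Rightarrow> real \<Rightarrow> real \<Rightarrow> real \<Rightarrow> real \<Rightarrow> real \<Rightarrow> real \<Rightarrow> real" where
  "quad_poly k0 k1 k2 k3 k4 k5 X Y = k0 + k1 * X + k2 * Y + k3 * X\<^sup>2 + k4 * X * Y + k5 * Y\<^sup>2"

lemma abs_quad_poly_le: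
  "\<bar>quad_poly k0 k1 k2 k3 k4 k5 X Y\<bar>
     \<le> (\<bar>k0\<bar> + \<bar>k1\<bar> + \<bar>k2\<bar> + \<bar>k3\<bar> + \<bar>k4\<bar> + \<bar>k5\<bar>) * quad_poly 1 0 0 1 0 1 X Y"
proof -
  define B where "B = 1 + X\<^sup>2 + Y\<^sup>2"
  have "2 * \<bar>X\<bar> \<le> X\<^sup>2 + 1" "2 * \<bar>Y\<bar> \<le> Y\<^sup>2 + 1" "2 * \<bar>X\<bar> * \<bar>Y\<bar> \<le> X\<^sup>2 + Y\<^sup>2"
    using sum_squares_bound[of "\<bar>X\<bar>" 1] sum_squares_bound[of "\<bar>Y\<bar>" 1]
      sum_squares_bound[of "\<bar>X\<bar>" "\<bar>Y\<bar>"] by simp_all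
  moreover have "0 \<le> X\<^sup>2" "0 \<le> Y\<^sup>2" "0 \<le> \<bar>X\<bar> * \<bar>Y\<bar>" by simp_all
  ultimately have bounds: "\<bar>X\<bar> \<le> B" "\<bar>Y\<bar> \<le> B" "\<bar>X\<bar> * \<bar>Y\<bar> \<le> B" "X\<^sup>2 \<le> B" "Y\<^sup>2 \<le> B" "1 \<le> B"
    unfolding B_def by linarith+
  have "\<bar>quad_poly k0 k1 k2 k3 k4 k5 X Y\<bar> \<le>
      \<bar>k0\<bar> + \<bar>k1 * X\<bar> + \<bar>k2 * Y\<bar> + \<bar>k3 * X\<^sup>2\<bar> + \<bar>k4 * (X * Y)\<bar> + \<bar>k5 * Y\<^sup>2\<bar>"
    unfolding quad_poly_def mult.assoc by linarith
  also have "\<dots> = \<bar>k0\<bar> * 1 + \<bar>k1\<bar> * \<bar>X\<bar> + \<bar>k2\<bar> * \<bar>Y\<bar> + \<bar>k3\<bar> * X\<^sup>2 + \<bar>k4\<bar> * (\<bar>X\<bar> * \<bar>Y\<bar>)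
      + \<bar>k5\<bar> * Y\<^sup>2"
    by (simp add: abs_mult)
  also have "\<dots> \<le> \<bar>k0\<bar> * B + \<bar>k1\<bar> * B + \<bar>k2\<bar> * B + \<bar>k3\<bar> * B + \<bar>k4\<bar> * B + \<bar>k5\<bar> * B"
    using bounds by (intro add_mono mult_left_mono) simp_all
  also have "\<dots> = (\<bar>k0\<bar> + \<bar>k1\<bar> + \<bar>k2\<bar> + \<bar>k3\<bar> + \<bar>k4\<bar> + \<bar>k5\<bar>) * quad_poly 1 0 0 1 0 1 X Y"
    by (simp add: quad_poly_def B_def algebra_simps)
  finally show ?thesis .
qed

lemma binorm_density_conditional:
  assumes s: "0 < s" and t: "0 < t" and c: "c\<^sup>2 < 1"
  shows "binorm_density (a, b, s, t, c) (x, y) =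
    normal_density a s x * normal_density (b + c * t * (x - a) / s) (t * sqrt (1 - c\<^sup>2)) y"
proof -
  have c1: "0 < 1 - c\<^sup>2" using c by simp
  have sq: "(sqrt (1 - c\<^sup>2))\<^sup>2 = 1 - c\<^sup>2" using c1 by simp
  have norm_const: "sqrt (2 * pi * s\<^sup>2) * sqrt (2 * pi * (t * sqrt (1 - c\<^sup>2))\<^sup>2) =
      2 * pi * s * t * sqrt (1 - c\<^sup>2)"
  proof -
    have "sqrt (2 * pi * s\<^sup>2) * sqrt (2 * pi * (t * sqrt (1 - c\<^sup>2))\<^sup>2) =
        sqrt ((2 * pi * s * t * sqrt (1 - c\<^sup>2))\<^sup>2)"
      by (simp only: real_sqrt_mult[symmetric])
        (simp add: power_mult_distrib sq power2_eq_square algebra_simps)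
    also have "\<dots> = 2 * pi * s * t * sqrt (1 - c\<^sup>2)" using s t c1 by simp
    finally show ?thesis .
  qed
  have exponent:
    "- (((x - a) / s)\<^sup>2 - 2 * c * ((x - a) / s) * ((y - b) / t) + ((y - b) / t)\<^sup>2) / (2 * (1 - c\<^sup>2))
      = - (x - a)\<^sup>2 / (2 * s\<^sup>2) + - (y - (b + c * t * (x - a) / s))\<^sup>2 / (2 * (t * sqrt (1 - c\<^sup>2))\<^sup>2)"
    using s t c1 by (simp add: power_mult_distrib sq field_simps power2_eq_square)
  show ?thesis
    unfolding binorm_density_def normal_density_def mu_X_def mu_Y_def sigma_X_def sigma_Y_def corr_def Let_def
    by (simp only: fst_conv snd_conv prod.case exponent exp_add norm_const[symmetric]) simp
qed

lemma binorm_density_nonneg: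
  assumes "0 < s" and "0 < t" and "c\<^sup>2 < 1"
  shows "0 \<le> binorm_density (a, b, s, t, c) z"
  using binorm_density_conditional[OF assms, of a b "fst z" "snd z"] by simp

lemma has_bochner_integral_normal_quadratic:
  assumes \<sigma>: "0 < \<sigma>"
  shows "has_bochner_integral lborel
    (\<lambda>y. normal_density m \<sigma> y * (A + B * (y - m) + C * (y - m)\<^sup>2)) (A + C * \<sigma>\<^sup>2)"
proof -
  have "has_bochner_integral lborel (\<lambda>y. A * normal_density m \<sigma> y + B * (normal_density m \<sigma> y * (y - m))
     + C * (normal_density m \<sigma> y * (y - m)\<^sup>2)) (A * 1 + B * 0 + C * \<sigma>\<^sup>2)"
    using normal_moment_even[OF \<sigma>, of m 0] normal_moment_odd[OF \<sigma>, of m 0] normal_moment_even[OF \<sigma>, of m 1] \<sigma>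
    by (intro has_bochner_integral_add has_bochner_integral_mult_right) simp_all
  then show ?thesis by (simp add: algebra_simps)
qed

lemma has_bochner_integral_binorm_section:
  assumes s: "0 < s" and t: "0 < t" and c: "c\<^sup>2 < 1"
  shows "has_bochner_integral lborel
    (\<lambda>y. binorm_density (a, b, s, t, c) (x, y) * quad_poly k0 k1 k2 k3 k4 k5 ((x - a) / s) ((y - b) / t))
    (normal_density a s x * ((k0 + k5 * (1 - c\<^sup>2)) + (k1 + k2 * c) * ((x - a) / s)
       + (k3 + k4 * c + k5 * c\<^sup>2) * ((x - a) / s)\<^sup>2))"
proof -
  define X where "X = (x - a) / s"
  define m where "m = b + c * t * (x - a) / s"
  define \<sigma> where "\<sigma> = t * sqrt (1 - c\<^sup>2)"
  have c1: "0 < 1 - c\<^sup>2" using c by simp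
  have \<sigma>_pos: "0 < \<sigma>" using t c1 by (simp add: \<sigma>_def)
  have \<sigma>_sq: "\<sigma>\<^sup>2 = t\<^sup>2 * (1 - c\<^sup>2)" using c1 by (simp add: \<sigma>_def power_mult_distrib)
  define A where "A = k0 + k1 * X + k3 * X\<^sup>2 + (k2 + k4 * X) * c * X + k5 * c\<^sup>2 * X\<^sup>2"
  define B where "B = (k2 + k4 * X) / t + 2 * k5 * c * X / t"
  define C where "C = k5 / t\<^sup>2"
  have recentre: "quad_poly k0 k1 k2 k3 k4 k5 X ((y - b) / t) = A + B * (y - m) + C * (y - m)\<^sup>2" for y
  proof -
    have "(y - b) / t = (y - m) / t + c * X" using t s by (simp add: m_def X_def field_simps)
    then show ?thesis unfolding quad_poly_def A_def B_def C_def using t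
      by (simp add: field_simps power2_eq_square)
  qed
  have "has_bochner_integral lborel
    (\<lambda>y. normal_density a s x * (normal_density m \<sigma> y * (A + B * (y - m) + C * (y - m)\<^sup>2)))
    (normal_density a s x * (A + C * \<sigma>\<^sup>2))"
    by (intro has_bochner_integral_mult_right has_bochner_integral_normal_quadratic \<sigma>_pos)
  moreover have "A + C * \<sigma>\<^sup>2 = (k0 + k5 * (1 - c\<^sup>2)) + (k1 + k2 * c) * X + (k3 + k4 * c + k5 * c\<^sup>2) * X\<^sup>2"
    using t unfolding A_def C_def \<sigma>_sq by (simp add: field_simps power2_eq_square)
  ultimately show ?thesis
    using binorm_density_conditional[OF s t c, of a b x] recentre
    by (simp add: m_def \<sigma>_def X_def mult.assoc)
qed

lemma has_bochner_integral_binorm_iterated: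
  assumes s: "0 < s" and t: "0 < t" and c: "c\<^sup>2 < 1"
  shows "has_bochner_integral lborel
    (\<lambda>x. \<integral>y. binorm_density (a, b, s, t, c) (x, y) * quad_poly k0 k1 k2 k3 k4 k5 ((x - a) / s) ((y - b) / t) \<partial>lborel)
    (k0 + k3 + k4 * c + k5)"
proof -
  define P0 P1 P2 where "P0 = k0 + k5 * (1 - c\<^sup>2)" and "P1 = k1 + k2 * c" and "P2 = k3 + k4 * c + k5 * c\<^sup>2"
  have "has_bochner_integral lborel
    (\<lambda>x. normal_density a s x * (P0 + (P1 / s) * (x - a) + (P2 / s\<^sup>2) * (x - a)\<^sup>2)) (P0 + (P2 / s\<^sup>2) * s\<^sup>2)"
    by (rule has_bochner_integral_normal_quadratic[OF s])
  moreover have "P0 + (P2 / s\<^sup>2) * s\<^sup>2 = k0 + k3 + k4 * c + k5"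
    using s by (simp add: P0_def P2_def field_simps)
  ultimately have "has_bochner_integral lborel
    (\<lambda>x. normal_density a s x * (P0 + P1 * ((x - a) / s) + P2 * ((x - a) / s)\<^sup>2)) (k0 + k3 + k4 * c + k5)"
    by (simp add: power_divide)
  then show ?thesis
    unfolding has_bochner_integral_integral_eq[OF has_bochner_integral_binorm_section[OF s t c]]
      P0_def P1_def P2_def .
qed

lemma integrable_binorm_quad_poly:
  assumes s: "0 < s" and t: "0 < t" and c: "c\<^sup>2 < 1"
  shows "integrable lborel
    (\<lambda>z. binorm_density (a, b, s, t, c) z * quad_poly k0 k1 k2 k3 k4 k5 ((fst z - a) / s) ((snd z - b) / t))"
proof -
  define F where "F k0 k1 k2 k3 k4 k5 z =
    binorm_density (a, b, s, t, c) z * quad_poly k0 k1 k2 k3 k4 k5 ((fst z - a) / s) ((snd z - b) / t)"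
    for k0 k1 k2 k3 k4 k5 z
  define K where "K = \<bar>k0\<bar> + \<bar>k1\<bar> + \<bar>k2\<bar> + \<bar>k3\<bar> + \<bar>k4\<bar> + \<bar>k5\<bar>"
  have F_measurable: "F k0 k1 k2 k3 k4 k5 \<in> borel_measurable (lborel \<Otimes>\<^sub>M lborel)" for k0 k1 k2 k3 k4 k5
    unfolding F_def binorm_density_def Let_def case_prod_beta quad_poly_def by measurable
  have dens_nonneg: "0 \<le> binorm_density (a, b, s, t, c) z" for z
    using binorm_density_nonneg[OF s t c] .
  have majorant_nonneg: "0 \<le> F 1 0 0 1 0 1 z" for z
    unfolding F_def quad_poly_def using dens_nonneg by simp
  \<comment> \<open>Fubini for the nonnegative majorant \<open>1 + X\<^sup>2 + Y\<^sup>2\<close>, then domination.\<close>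
  have "integrable (lborel \<Otimes>\<^sub>M lborel) (F 1 0 0 1 0 1)"
  proof (rule lborel_pair.Fubini_integrable)
    have "(\<lambda>x. \<integral>y. norm (F 1 0 0 1 0 1 (x, y)) \<partial>lborel) = (\<lambda>x. \<integral>y. F 1 0 0 1 0 1 (x, y) \<partial>lborel)"
      using majorant_nonneg by simp
    then show "integrable lborel (\<lambda>x. \<integral>y. norm (F 1 0 0 1 0 1 (x, y)) \<partial>lborel)"
      using has_bochner_integral_binorm_iterated[OF s t c, of a b 1 0 0 1 0 1]
      by (simp add: F_def has_bochner_integral_iff)
    show "AE x in lborel. integrable lborel (\<lambda>y. F 1 0 0 1 0 1 (x, y))"
      using has_bochner_integral_binorm_section[OF s t c] by (simp add: F_def has_bochner_integral_iff)
  qed (rule F_measurable)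
  then have "integrable (lborel \<Otimes>\<^sub>M lborel) (\<lambda>z. K * F 1 0 0 1 0 1 z)"
    by simp
  then have "integrable (lborel \<Otimes>\<^sub>M lborel) (F k0 k1 k2 k3 k4 k5)"
  proof (rule Bochner_Integration.integrable_bound)
    have "norm (F k0 k1 k2 k3 k4 k5 z) \<le> norm (K * F 1 0 0 1 0 1 z)" for z
    proof -
      have "norm (F k0 k1 k2 k3 k4 k5 z) =
          binorm_density (a, b, s, t, c) z * \<bar>quad_poly k0 k1 k2 k3 k4 k5 ((fst z - a) / s) ((snd z - b) / t)\<bar>"
        unfolding F_def using dens_nonneg by (simp add: abs_mult)
      also have "\<dots> \<le> binorm_density (a, b, s, t, c) z * (K * quad_poly 1 0 0 1 0 1 ((fst z - a) / s) ((snd z - b) / t))"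
        unfolding K_def by (intro mult_left_mono abs_quad_poly_le dens_nonneg)
      also have "\<dots> = K * F 1 0 0 1 0 1 z"
        by (simp add: F_def)
      also have "\<dots> = norm (K * F 1 0 0 1 0 1 z)"
        using majorant_nonneg[of z] by (simp add: K_def abs_mult)
      finally show ?thesis .
    qed
    then show "AE z in lborel \<Otimes>\<^sub>M lborel. norm (F k0 k1 k2 k3 k4 k5 z) \<le> norm (K * F 1 0 0 1 0 1 z)"
      by simp
  qed (rule F_measurable)
  then show ?thesis
    unfolding F_def lborel_prod .
qed

lemma integral_binorm_quad_poly:
  assumes s: "0 < s" and t: "0 < t" and c: "c\<^sup>2 < 1"
  shows "(\<integral>z. binorm_density (a, b, s, t, c) z * quad_poly k0 k1 k2 k3 k4 k5 ((fst z - a) / s) ((snd z - b) / t) \<partial>lborel)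
    = k0 + k3 + k4 * c + k5"
proof -
  have "integrable (lborel \<Otimes>\<^sub>M lborel)
    (\<lambda>z. binorm_density (a, b, s, t, c) z * quad_poly k0 k1 k2 k3 k4 k5 ((fst z - a) / s) ((snd z - b) / t))"
    using integrable_binorm_quad_poly[OF s t c] unfolding lborel_prod .
  from lborel_pair.integral_fst'[OF this] show ?thesis
    using has_bochner_integral_integral_eq[OF has_bochner_integral_binorm_iterated[OF s t c]]
    by (simp add: lborel_prod)
qed

lemma ln_binorm_density:
  assumes s: "0 < s" and t: "0 < t" and c: "c\<^sup>2 < 1"
  shows "ln (binorm_density (a, b, s, t, c) (x, y)) =
    - (((x - a) / s)\<^sup>2 - 2 * c * ((x - a) / s) * ((y - b) / t) + ((y - b) / t)\<^sup>2) / (2 * (1 - c\<^sup>2))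
    - ln (2 * pi * s * t * sqrt (1 - c\<^sup>2))"
proof -
  have "0 < 1 - c\<^sup>2" using c by simp
  then have ln_quotient:
    "ln (exp E / (2 * pi * s * t * sqrt (1 - c\<^sup>2))) = E - ln (2 * pi * s * t * sqrt (1 - c\<^sup>2))" for E
    using s t by (simp add: ln_div)
  show ?thesis
    unfolding binorm_density_def mu_X_def mu_Y_def sigma_X_def sigma_Y_def corr_def Let_def
    by (simp only: fst_conv snd_conv prod.case ln_quotient)
qed

lemma rel_entropy_binorm:
  assumes sx: "0 < sx" and sy: "0 < sy" and r: "r\<^sup>2 < 1"
    and s: "0 < s" and t: "0 < t" and c: "c\<^sup>2 < 1"
  shows "rel_entropy (a, b, s, t, c) (mx, my, sx, sy, r) =
    - ln (s / sx) - ln (t / sy) + ln (1 - r\<^sup>2) / 2 - ln (1 - c\<^sup>2) / 2 - 1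
    + (((a - mx) / sx)\<^sup>2 - 2 * r * ((a - mx) / sx) * ((b - my) / sy) + ((b - my) / sy)\<^sup>2
       + (s / sx)\<^sup>2 - 2 * r * c * (s / sx) * (t / sy) + (t / sy)\<^sup>2) / (2 * (1 - r\<^sup>2))"
proof -
  define u v dx dy where "u = s / sx" and "v = t / sy" and "dx = (a - mx) / sx" and "dy = (b - my) / sy"
  define ic iC where "ic = 1 / (1 - c\<^sup>2)" and "iC = 1 / (1 - r\<^sup>2)"
  define Lq Lp where "Lq = ln (2 * pi * s * t * sqrt (1 - c\<^sup>2))" and "Lp = ln (2 * pi * sx * sy * sqrt (1 - r\<^sup>2))"
  define k0 k1 k2 k3 k4 k5 where
    "k0 = Lp - Lq + (dx\<^sup>2 - 2 * r * dx * dy + dy\<^sup>2) * iC / 2"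
    and "k1 = (u * dx - r * u * dy) * iC" and "k2 = (v * dy - r * v * dx) * iC"
    and "k3 = u\<^sup>2 * iC / 2 - ic / 2" and "k4 = c * ic - r * u * v * iC" and "k5 = v\<^sup>2 * iC / 2 - ic / 2"
  have log_ratio: "ln (binorm_density (a, b, s, t, c) z) - ln (binorm_density (mx, my, sx, sy, r) z)
      = quad_poly k0 k1 k2 k3 k4 k5 ((fst z - a) / s) ((snd z - b) / t)" for z
  proof -
    obtain x y where z: "z = (x, y)" by (cases z)
    define X Y where "X = (x - a) / s" and "Y = (y - b) / t"
    have U: "(x - mx) / sx = u * X + dx" and V: "(y - my) / sy = v * Y + dy"
      using s sx t sy by (simp_all add: u_def v_def X_def Y_def dx_def dy_def field_simps)
    have "ln (binorm_density (a, b, s, t, c) z) = - (X\<^sup>2 - 2 * c * X * Y + Y\<^sup>2) * ic / 2 - Lq"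
      unfolding z ln_binorm_density[OF s t c] X_def Y_def Lq_def ic_def by simp
    moreover have "ln (binorm_density (mx, my, sx, sy, r) z) =
        - ((u * X + dx)\<^sup>2 - 2 * r * (u * X + dx) * (v * Y + dy) + (v * Y + dy)\<^sup>2) * iC / 2 - Lp"
      unfolding z ln_binorm_density[OF sx sy r] U V Lp_def iC_def by simp
    ultimately show ?thesis
      unfolding z fst_conv snd_conv X_def[symmetric] Y_def[symmetric] quad_poly_def
        k0_def k1_def k2_def k3_def k4_def k5_def
      by (simp add: field_simps power2_eq_square)
  qed
  have "rel_entropy (a, b, s, t, c) (mx, my, sx, sy, r) = k0 + k3 + k4 * c + k5"
    unfolding rel_entropy_def log_ratio by (rule integral_binorm_quad_poly[OF s t c])
  also have "\<dots> = (Lp - Lq) + (dx\<^sup>2 - 2 * r * dx * dy + dy\<^sup>2 + u\<^sup>2 - 2 * r * c * u * v + v\<^sup>2) * iC / 2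
       - (1 - c\<^sup>2) * ic"
    unfolding k0_def k3_def k4_def k5_def by (simp add: field_simps power2_eq_square)
  also have "(1 - c\<^sup>2) * ic = 1"
    using c by (simp add: ic_def)
  also have "Lp - Lq = - ln u - ln v + ln (1 - r\<^sup>2) / 2 - ln (1 - c\<^sup>2) / 2"
    unfolding Lp_def Lq_def u_def v_def using sx sy s t r c by (simp add: ln_mult ln_div ln_sqrt)
  finally show ?thesis
    unfolding u_def v_def dx_def dy_def iC_def by simp
qed

definition min_rel_entropy :: "real \<Rightarrow> real \<Rightarrow> real" where
  "min_rel_entropy r c = ln (1 - r * c) - ln (1 - r\<^sup>2) / 2 - ln (1 - c\<^sup>2) / 2"

definition posterior_scale :: "real \<Rightarrow> real \<Rightarrow> real" where
  "posterior_scale r c = sqrt ((1 - r\<^sup>2) / (1 - r * c))"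

definition pooled_params :: "binorm_params \<Rightarrow> real \<Rightarrow> binorm_params" where
  "pooled_params p c = (mu_X p, mu_Y p, sigma_X p * posterior_scale (corr p) c,
     sigma_Y p * posterior_scale (corr p) c, c)"

lemma scale_term_lower_bound:
  fixes u v k C :: real
  assumes u: "0 < u" and v: "0 < v" and k: "k < 1" and C: "0 < C"
  shows "1 - ln C + ln (1 - k) \<le> - ln u - ln v + (u\<^sup>2 - 2 * k * u * v + v\<^sup>2) / (2 * C)"
    and "- ln u - ln v + (u\<^sup>2 - 2 * k * u * v + v\<^sup>2) / (2 * C) \<le> 1 - ln C + ln (1 - k)
      \<Longrightarrow> u = v \<and> u * v = C / (1 - k)"
proof -
  define x where "x = (1 - k) * (u * v) / C"
  have x_pos: "0 < x" using u v k C by (simp add: x_def)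
  have ln_x: "ln x = ln (1 - k) + ln u + ln v - ln C"
    using u v k C by (simp add: x_def ln_mult ln_div)
  have split: "(u\<^sup>2 - 2 * k * u * v + v\<^sup>2) / (2 * C) = x + (u - v)\<^sup>2 / (2 * C)"
    using C by (simp add: x_def field_simps power2_eq_square)
  have gap: "0 \<le> (u - v)\<^sup>2 / (2 * C)" using C by simp
  have ln_le: "ln x \<le> x - 1" by (rule ln_le_minus_one[OF x_pos])
  show "1 - ln C + ln (1 - k) \<le> - ln u - ln v + (u\<^sup>2 - 2 * k * u * v + v\<^sup>2) / (2 * C)"
    unfolding split using ln_x ln_le gap by linarith
  assume "- ln u - ln v + (u\<^sup>2 - 2 * k * u * v + v\<^sup>2) / (2 * C) \<le> 1 - ln C + ln (1 - k)"
  then have "ln x = x - 1" and "(u - v)\<^sup>2 / (2 * C) \<le> 0"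
    unfolding split using ln_x ln_le gap by linarith+
  then have "x = 1" and "u = v"
    using ln_eq_minus_one[OF x_pos] C by (auto simp: divide_le_0_iff)
  then show "u = v \<and> u * v = C / (1 - k)"
    using k C by (simp add: x_def field_simps)
qed

lemma rel_entropy_lower_bound:
  assumes p: "valid_params p" and q: "valid_params q"
  shows "min_rel_entropy (corr p) (corr q) \<le> rel_entropy q p"
    and "rel_entropy q p \<le> min_rel_entropy (corr p) (corr q) \<Longrightarrow>
      mu_Y q = mu_Y p \<and> sigma_Y q = sigma_Y p * posterior_scale (corr p) (corr q)"
proof -
  obtain mx my sx sy r where p_eq: "p = (mx, my, sx, sy, r)" by (cases p)
  obtain a b s t c where q_eq: "q = (a, b, s, t, c)" by (cases q)
  have sx: "0 < sx" and sy: "0 < sy" and r: "r\<^sup>2 < 1" using p by (simp_all add: p_eq valid_params_iff)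
  have s: "0 < s" and t: "0 < t" and c: "c\<^sup>2 < 1" using q by (simp_all add: q_eq valid_params_iff)
  define u v dx dy where "u = s / sx" and "v = t / sy" and "dx = (a - mx) / sx" and "dy = (b - my) / sy"
  define C k where "C = 1 - r\<^sup>2" and "k = r * c"
  have C: "0 < C" using r by (simp add: C_def)
  have k: "k < 1" using mult_less_1_of_squares_less_1[OF r c] by (simp add: k_def)
  have u: "0 < u" and v: "0 < v" using s sx t sy by (simp_all add: u_def v_def)
  define \<Delta> where "\<Delta> = dx\<^sup>2 - 2 * r * dx * dy + dy\<^sup>2"
  have \<Delta>_eq: "\<Delta> = (dx - r * dy)\<^sup>2 + C * dy\<^sup>2"
    by (simp add: \<Delta>_def C_def power2_eq_square algebra_simps)
  have \<Delta>_term: "0 \<le> \<Delta> / (2 * C)" unfolding \<Delta>_eq using C by simp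
  have RE: "rel_entropy q p = (- ln u - ln v + (u\<^sup>2 - 2 * k * u * v + v\<^sup>2) / (2 * C))
      + ln C / 2 - ln (1 - c\<^sup>2) / 2 - 1 + \<Delta> / (2 * C)"
    unfolding p_eq q_eq rel_entropy_binorm[OF sx sy r s t c]
    unfolding u_def[symmetric] v_def[symmetric] dx_def[symmetric] dy_def[symmetric] C_def[symmetric]
      \<Delta>_def k_def
    using C by (simp add: field_simps)
  have M: "min_rel_entropy (corr p) (corr q) = ln (1 - k) - ln C / 2 - ln (1 - c\<^sup>2) / 2"
    by (simp add: p_eq q_eq corr_def min_rel_entropy_def k_def C_def)
  show "min_rel_entropy (corr p) (corr q) \<le> rel_entropy q p"
    unfolding RE M using scale_term_lower_bound(1)[OF u v k C] \<Delta>_term by linarith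
  assume "rel_entropy q p \<le> min_rel_entropy (corr p) (corr q)"
  then have scale_eq: "- ln u - ln v + (u\<^sup>2 - 2 * k * u * v + v\<^sup>2) / (2 * C) \<le> 1 - ln C + ln (1 - k)"
    and "\<Delta> / (2 * C) \<le> 0"
    unfolding RE M using scale_term_lower_bound(1)[OF u v k C] \<Delta>_term by linarith+
  then have "(dx - r * dy)\<^sup>2 + C * dy\<^sup>2 \<le> 0"
    unfolding \<Delta>_eq using C by (simp add: divide_le_0_iff)
  then have "C * dy\<^sup>2 \<le> 0"
    using zero_le_power2[of "dx - r * dy"] by linarith
  then have "b = my"
    using C sy by (simp add: dy_def mult_le_0_iff)
  moreover have "v\<^sup>2 = C / (1 - k)"
    using scale_term_lower_bound(2)[OF u v k C scale_eq] by (auto simp: power2_eq_square)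
  then have "v = sqrt (C / (1 - k))"
    using real_sqrt_unique[of v "C / (1 - k)"] v by simp
  ultimately show "mu_Y q = mu_Y p \<and> sigma_Y q = sigma_Y p * posterior_scale (corr p) (corr q)"
    using sy
    by (simp add: p_eq q_eq mu_Y_def sigma_Y_def corr_def posterior_scale_def v_def C_def k_def field_simps)
qed

lemma min_rel_entropy_less:
  fixes r c d :: real
  assumes r: "r\<^sup>2 < 1" and c: "c\<^sup>2 < 1" and d: "d\<^sup>2 < 1"
    and between: "(c < d \<and> d \<le> r) \<or> (r \<le> d \<and> d < c)"
  shows "min_rel_entropy r d < min_rel_entropy r c"
proof -
  define \<psi> where "\<psi> = (c - r) * (2 * r * d - (1 + r\<^sup>2)) + (d - r) * (r\<^sup>2 - 1)"
  have factor: "(1 - r * c)\<^sup>2 * (1 - d\<^sup>2) - (1 - r * d)\<^sup>2 * (1 - c\<^sup>2) = (d - c) * \<psi>"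
    unfolding \<psi>_def by (simp add: power2_eq_square algebra_simps)
  have "2 * r * d \<le> r\<^sup>2 + d\<^sup>2" by (rule sum_squares_bound)
  then have "2 * r * d - (1 + r\<^sup>2) < 0" using d by simp
  moreover have "r\<^sup>2 - 1 < 0" using r by simp
  ultimately have "0 < (d - c) * \<psi>"
    using between
  proof (elim disjE conjE)
    assume "c < d" "d \<le> r" "2 * r * d - (1 + r\<^sup>2) < 0" "r\<^sup>2 - 1 < 0"
    then have "0 < (c - r) * (2 * r * d - (1 + r\<^sup>2))" "0 \<le> (d - r) * (r\<^sup>2 - 1)"
      by (simp_all add: mult_neg_neg mult_nonpos_nonpos)
    then show ?thesis using \<open>c < d\<close> unfolding \<psi>_def by simp
  next
    assume "r \<le> d" "d < c" "2 * r * d - (1 + r\<^sup>2) < 0" "r\<^sup>2 - 1 < 0"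
    then have "(c - r) * (2 * r * d - (1 + r\<^sup>2)) < 0" "(d - r) * (r\<^sup>2 - 1) \<le> 0"
      by (simp_all add: mult_pos_neg mult_nonneg_nonpos)
    then show ?thesis using \<open>d < c\<close> unfolding \<psi>_def by (simp add: mult_neg_neg)
  qed
  then have "(1 - r * d)\<^sup>2 * (1 - c\<^sup>2) < (1 - r * c)\<^sup>2 * (1 - d\<^sup>2)"
    using factor by linarith
  moreover have "0 < 1 - r * c" "0 < 1 - r * d" "0 < 1 - c\<^sup>2" "0 < 1 - d\<^sup>2"
    using mult_less_1_of_squares_less_1[OF r c] mult_less_1_of_squares_less_1[OF r d] c d by simp_all
  ultimately have "ln ((1 - r * d)\<^sup>2 * (1 - c\<^sup>2)) < ln ((1 - r * c)\<^sup>2 * (1 - d\<^sup>2))"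
    by (intro ln_strict_mono) simp_all
  then have "2 * ln (1 - r * d) + ln (1 - c\<^sup>2) < 2 * ln (1 - r * c) + ln (1 - d\<^sup>2)"
    using \<open>0 < 1 - r * c\<close> \<open>0 < 1 - r * d\<close> \<open>0 < 1 - c\<^sup>2\<close> \<open>0 < 1 - d\<^sup>2\<close>
    by (simp add: ln_mult power2_eq_square)
  then show ?thesis
    unfolding min_rel_entropy_def by linarith
qed

lemma
  assumes p: "valid_params p" and c: "-1 < c" "c < 1"
  shows valid_pooled_params: "valid_params (pooled_params p c)"
    and corr_pooled_params: "corr (pooled_params p c) = c"
    and rel_entropy_pooled_params: "rel_entropy (pooled_params p c) p = min_rel_entropy (corr p) c"
proof -
  obtain mx my sx sy r where p_eq: "p = (mx, my, sx, sy, r)" by (cases p)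
  have sx: "0 < sx" and sy: "0 < sy" and r: "r\<^sup>2 < 1" using p by (simp_all add: p_eq valid_params_iff)
  have c2: "c\<^sup>2 < 1" using square_less_1I[OF c] .
  define w where "w = posterior_scale r c"
  have k: "0 < 1 - r * c" using mult_less_1_of_squares_less_1[OF r c2] by simp
  have w: "0 < w" using r k by (simp add: w_def posterior_scale_def)
  have w_sq: "w\<^sup>2 = (1 - r\<^sup>2) / (1 - r * c)" using r k by (simp add: w_def posterior_scale_def)
  have pooled_eq: "pooled_params p c = (mx, my, sx * w, sy * w, c)"
    by (simp add: pooled_params_def p_eq mu_X_def mu_Y_def sigma_X_def sigma_Y_def corr_def w_def)
  show "valid_params (pooled_params p c)"
    unfolding pooled_eq valid_params_iff using sx sy w c2 by simp
  show "corr (pooled_params p c) = c"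
    by (simp add: pooled_eq corr_def)
  have "rel_entropy (pooled_params p c) p =
      - 2 * ln w + ln (1 - r\<^sup>2) / 2 - ln (1 - c\<^sup>2) / 2 - 1 + (2 * (1 - r * c) * w\<^sup>2) / (2 * (1 - r\<^sup>2))"
    unfolding pooled_eq
    unfolding p_eq rel_entropy_binorm[OF sx sy r mult_pos_pos[OF sx w] mult_pos_pos[OF sy w] c2]
    using sx sy w by (simp add: ln_mult power2_eq_square algebra_simps)
  also have "(2 * (1 - r * c) * w\<^sup>2) / (2 * (1 - r\<^sup>2)) = 1"
    using k r w_sq by (simp add: field_simps)
  also have "ln w = (ln (1 - r\<^sup>2) - ln (1 - r * c)) / 2"
    using r k by (simp add: w_def posterior_scale_def ln_sqrt ln_div)
  finally show "rel_entropy (pooled_params p c) p = min_rel_entropy (corr p) c"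
    using r by (simp add: p_eq corr_def min_rel_entropy_def field_simps)
qed

lemma posterior_of_corr_view:
  assumes p: "valid_params p" and c0: "-1 < c0" "c0 < 1" "P c0"
    and closest: "\<And>c. P c \<Longrightarrow> c \<noteq> c0 \<Longrightarrow>
      (c < c0 \<and> c0 \<le> corr p) \<or> (corr p \<le> c0 \<and> c0 < c)"
  shows "is_posterior p (\<lambda>q. P (corr q)) (pooled_params p c0)"
    and "is_posterior p (\<lambda>q. P (corr q)) q \<Longrightarrow>
      CoVaR \<alpha> q = mu_Y p + sigma_Y p * posterior_scale (corr p) c0 * Phi_inv \<alpha>"
proof -
  note pooled = valid_pooled_params[OF p c0(1,2)] corr_pooled_params[OF p c0(1,2)]
    rel_entropy_pooled_params[OF p c0(1,2)]
  have closer: "min_rel_entropy (corr p) c0 < min_rel_entropy (corr p) (corr q)"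
    if q: "valid_params q" "P (corr q)" "corr q \<noteq> c0" for q
  proof -
    have corr_q: "-1 < corr q" "corr q < 1" using q(1) by (simp_all add: valid_params_def)
    have corr_p: "-1 < corr p" "corr p < 1" using p by (simp_all add: valid_params_def)
    show ?thesis
      using min_rel_entropy_less[OF square_less_1I[OF corr_p] square_less_1I[OF corr_q]
          square_less_1I[OF c0(1,2)]] closest[OF q(2,3)]
      by blast
  qed
  have minimal: "min_rel_entropy (corr p) c0 \<le> rel_entropy q p"
    if q: "valid_params q" "P (corr q)" for q
  proof (cases "corr q = c0")
    case True
    then show ?thesis using rel_entropy_lower_bound(1)[OF p q(1)] by simp
  next
    case False
    then show ?thesis using closer[OF q False] rel_entropy_lower_bound(1)[OF p q(1)] by linarith
  qed
  show "is_posterior p (\<lambda>q. P (corr q)) (pooled_params p c0)"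
    unfolding is_posterior_def pooled(3) using pooled(1,2) c0(3) minimal by simp
  assume post: "is_posterior p (\<lambda>q. P (corr q)) q"
  then have q: "valid_params q" "P (corr q)"
    by (simp_all add: is_posterior_def)
  have le: "rel_entropy q p \<le> min_rel_entropy (corr p) c0"
    using post pooled c0(3) unfolding is_posterior_def by metis
  have "corr q = c0"
    using closer[OF q] rel_entropy_lower_bound(1)[OF p q(1)] le by fastforce
  then show "CoVaR \<alpha> q = mu_Y p + sigma_Y p * posterior_scale (corr p) c0 * Phi_inv \<alpha>"
    using rel_entropy_lower_bound(2)[OF p q(1)] le by (simp add: CoVaR_def)
qed

theorem theorem3p4:
  fixes mx my sx sy r \<alpha> r1 :: real
  assumes "sx > 0" and "sy > 0" and "-1 < r" and "r < 1"
    and "0 < \<alpha>" and "\<alpha> < 1" and "-1 < r1" and "r1 < 1"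
  shows
    \<comment> \<open>(i) equality view\<close>
    "((\<exists>q. is_posterior (mx, my, sx, sy, r) (\<lambda>q. corr q = r1) q) \<and>
      (\<forall>q. is_posterior (mx, my, sx, sy, r) (\<lambda>q. corr q = r1) q \<longrightarrow>
         CoVaR \<alpha> q = my + sy * ((1 - r\<^sup>2) / (1 - r * r1)) powr (1/2) * Phi_inv \<alpha>))
     \<and>
     \<comment> \<open>(ii) view corr <= r1\<close>
     ((\<exists>q. is_posterior (mx, my, sx, sy, r) (\<lambda>q. corr q \<le> r1) q) \<and>
      (r \<le> r1 \<longrightarrow> (\<forall>q. is_posterior (mx, my, sx, sy, r) (\<lambda>q. corr q \<le> r1) q \<longrightarrow>
         CoVaR \<alpha> q = VaR \<alpha> (mx, my, sx, sy, r))) \<and>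
      (r > r1 \<longrightarrow> (\<forall>q q'. is_posterior (mx, my, sx, sy, r) (\<lambda>q. corr q \<le> r1) q \<longrightarrow>
         is_posterior (mx, my, sx, sy, r) (\<lambda>q. corr q = r1) q' \<longrightarrow> CoVaR \<alpha> q = CoVaR \<alpha> q')))
     \<and>
     \<comment> \<open>(iii) view corr >= r1\<close>
     ((\<exists>q. is_posterior (mx, my, sx, sy, r) (\<lambda>q. corr q \<ge> r1) q) \<and>
      (r \<ge> r1 \<longrightarrow> (\<forall>q. is_posterior (mx, my, sx, sy, r) (\<lambda>q. corr q \<ge> r1) q \<longrightarrow>
         CoVaR \<alpha> q = VaR \<alpha> (mx, my, sx, sy, r))) \<and>
      (r < r1 \<longrightarrow> (\<forall>q q'. is_posterior (mx, my, sx, sy, r) (\<lambda>q. corr q \<ge> r1) q \<longrightarrow>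
         is_posterior (mx, my, sx, sy, r) (\<lambda>q. corr q = r1) q' \<longrightarrow> CoVaR \<alpha> q = CoVaR \<alpha> q')))"
proof -
  let ?p = "(mx, my, sx, sy, r)"
  have p: "valid_params ?p"
    using assms by (simp add: valid_params_def sigma_X_def sigma_Y_def corr_def)
  have prior: "mu_Y ?p = my" "sigma_Y ?p = sy" "corr ?p = r" "VaR \<alpha> ?p = my + sy * Phi_inv \<alpha>"
    by (simp_all add: mu_Y_def sigma_Y_def corr_def VaR_def)
  have r: "r\<^sup>2 < 1" and r1: "r1\<^sup>2 < 1"
    using square_less_1I assms by simp_all
  then have scale_r: "posterior_scale r r = 1"
    by (simp add: posterior_scale_def power2_eq_square[symmetric])
  have "0 \<le> (1 - r\<^sup>2) / (1 - r * r1)"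
    using r mult_less_1_of_squares_less_1[OF r r1] by simp
  then have powr_eq: "((1 - r\<^sup>2) / (1 - r * r1)) powr (1/2) = posterior_scale r r1"
    by (simp add: posterior_scale_def powr_half_sqrt)
  have closest_le: "(c < min r r1 \<and> min r r1 \<le> corr ?p) \<or> (corr ?p \<le> min r r1 \<and> min r r1 < c)"
    if "c \<le> r1" "c \<noteq> min r r1" for c
    using that by (auto simp: prior min_def)
  have closest_ge: "(c < max r r1 \<and> max r r1 \<le> corr ?p) \<or> (corr ?p \<le> max r r1 \<and> max r r1 < c)"
    if "r1 \<le> c" "c \<noteq> max r r1" for c
    using that by (auto simp: prior max_def)
  have eq_view: "is_posterior ?p (\<lambda>q. corr q = r1) (pooled_params ?p r1)"
    "is_posterior ?p (\<lambda>q. corr q = r1) q \<Longrightarrow> CoVaR \<alpha> q = my + sy * posterior_scale r r1 * Phi_inv \<alpha>"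
    for q
    using posterior_of_corr_view[OF p assms(7,8), of "\<lambda>c. c = r1"] by (simp_all add: prior)
  have le_view: "is_posterior ?p (\<lambda>q. corr q \<le> r1) (pooled_params ?p (min r r1))"
    "is_posterior ?p (\<lambda>q. corr q \<le> r1) q \<Longrightarrow>
      CoVaR \<alpha> q = my + sy * posterior_scale r (min r r1) * Phi_inv \<alpha>"
    for q
    using posterior_of_corr_view[where P = "\<lambda>c. c \<le> r1", OF p _ _ _ closest_le] assms
    by (simp_all add: prior)
  have ge_view: "is_posterior ?p (\<lambda>q. corr q \<ge> r1) (pooled_params ?p (max r r1))"
    "is_posterior ?p (\<lambda>q. corr q \<ge> r1) q \<Longrightarrow>
      CoVaR \<alpha> q = my + sy * posterior_scale r (max r r1) * Phi_inv \<alpha>"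
    for q
    using posterior_of_corr_view[where P = "\<lambda>c. r1 \<le> c", OF p _ _ _ closest_ge] assms
    by (simp_all add: prior)
  show ?thesis
    unfolding powr_eq prior(4)
    using eq_view le_view ge_view scale_r
    by (auto simp: min_def max_def simp del: split_paired_Ex split_paired_All)
qed

end
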